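(* Let $\ket\psi$ be an $n$-qubit stabilizer state, $S=\mathrm{Weyl}(\ket\psi)$, and $T\subseteq S$ a subspace of dimension $n-t$. Then there exists a Clifford circuit $C$ such that $C\ket\psi=\ket{0^n}$, $C(S)=0^n\times\mathbb F_2^n$, and $C(T)=0^{n+t}\times\mathbb F_2^{n-t}$.
   Context: For $x=(a,b)\in\mathbb F_2^{2n}$, $W_x = i^{a\cdot b}X^{a_1}Z^{b_1}\otimes\cdots\otimes X^{a_n}Z^{b_n}$ ($a\cdot b$ over the integers); $\mathrm{Weyl}(\ket\psi)=\{x:W_x\ket\psi=\pm\ket\psi\}$. A Clifford circuit $C$ acts on $\mathbb F_2^{2n}$ by: $C(x)=y$ where $y$ is the unique element with $CW_xC^\dagger=\pm W_y$; for a set $A$, $C(A)=\{C(x):x\in A\}$. Equalities of states such as $C\ket\psi=\ket{0^n}$ are up to global phase. *)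

theory Defs
  imports "HOL-Analysis.Analysis" "HOL-Library.Z2"
begin

text \<open>Qubits are indexed by a finite linearly ordered type 'n (n = CARD('n)); the order
  fixes the ordering of the qubits 1..n. The computational basis of the n-qubit space
  is indexed by bitstrings 'n => bool (False = 0, True = 1).\<close>

type_synonym 'n qstate = "complex ^ ('n \<Rightarrow> bool)"
type_synonym 'n qop = "complex ^ ('n \<Rightarrow> bool) ^ ('n \<Rightarrow> bool)"
type_synonym qop1 = "complex ^ bool ^ bool"

definition adjoint_op :: "complex ^ 'a ^ 'a \<Rightarrow> complex ^ 'a ^ 'a" where
  "adjoint_op A = (\<chi> i j. cnj (A $ j $ i))"

definition tensor :: "('n::finite \<Rightarrow> qop1) \<Rightarrow> 'n qop" where
  "tensor U = (\<chi> r c. \<Prod>j\<in>UNIV. U j $ (r j) $ (c j))"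

definition ket0 :: "'n::finite qstate" where
  "ket0 = (\<chi> c. if c = (\<lambda>_. False) then 1 else 0)"

definition pauliI :: qop1 where "pauliI = (\<chi> r c. if r = c then 1 else 0)"
definition pauliX :: qop1 where "pauliX = (\<chi> r c. if r \<noteq> c then 1 else 0)"
definition pauliZ :: qop1 where
  "pauliZ = (\<chi> r c. if r = c then (if c then -1 else 1) else 0)"
definition hadamard :: qop1 where
  "hadamard = (\<chi> r c. (if r \<and> c then -1 else 1) / complex_of_real (sqrt 2))"
definition phaseS :: qop1 where
  "phaseS = (\<chi> r c. if r = c then (if c then \<i> else 1) else 0)"

definition on_qubit :: "'n \<Rightarrow> qop1 \<Rightarrow> 'n::finite qop" where
  "on_qubit j G = tensor (\<lambda>k. if k = j then G else pauliI)"

definition cnot :: "'n \<Rightarrow> 'n \<Rightarrow> 'n::finite qop" where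
  "cnot j k = (\<chi> r c. if r = c(k := (c k \<noteq> c j)) then 1 else 0)"

inductive_set clifford_circuits :: "'n::finite qop set" where
  id_circ: "mat 1 \<in> clifford_circuits"
| H_gate: "C \<in> clifford_circuits \<Longrightarrow> on_qubit j hadamard ** C \<in> clifford_circuits"
| S_gate: "C \<in> clifford_circuits \<Longrightarrow> on_qubit j phaseS ** C \<in> clifford_circuits"
| CNOT_gate: "C \<in> clifford_circuits \<Longrightarrow> j \<noteq> k \<Longrightarrow> cnot j k ** C \<in> clifford_circuits"

definition eq_up_to_phase :: "'n::finite qstate \<Rightarrow> 'n qstate \<Rightarrow> bool" where
  "eq_up_to_phase \<phi> \<psi> \<longleftrightarrow> (\<exists>\<omega>::complex. cmod \<omega> = 1 \<and> \<phi> = \<omega> *s \<psi>)"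

definition stabilizer_state :: "'n::finite qstate \<Rightarrow> bool" where
  "stabilizer_state \<psi> \<longleftrightarrow> (\<exists>C\<in>clifford_circuits. eq_up_to_phase \<psi> (C *v ket0))"

text \<open>An element x of F_2^{2n} is x :: bit^('n + 'n), with x = (a,b),
  a_j = x $ Inl j and b_j = x $ Inr j.\<close>

definition xpart :: "bit ^ ('n::finite + 'n) \<Rightarrow> 'n \<Rightarrow> bool" where
  "xpart x j = (x $ Inl j = 1)"
definition zpart :: "bit ^ ('n::finite + 'n) \<Rightarrow> 'n \<Rightarrow> bool" where
  "zpart x j = (x $ Inr j = 1)"

definition weyl :: "bit ^ ('n + 'n) \<Rightarrow> 'n::finite qop" where
  "weyl x = (\<chi> r c. \<i> ^ card {j. xpart x j \<and> zpart x j} *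
     tensor (\<lambda>j. (if xpart x j then pauliX else pauliI) ** (if zpart x j then pauliZ else pauliI)) $ r $ c)"

definition Weyl_set :: "'n::finite qstate \<Rightarrow> (bit ^ ('n + 'n)) set" where
  "Weyl_set \<psi> = {x. weyl x *v \<psi> = \<psi> \<or> weyl x *v \<psi> = - \<psi>}"

definition clifford_act :: "'n::finite qop \<Rightarrow> bit ^ ('n + 'n) \<Rightarrow> bit ^ ('n + 'n)" where
  "clifford_act C x = (THE y. C ** weyl x ** adjoint_op C = weyl y \<or>
                              C ** weyl x ** adjoint_op C = - weyl y)"

text \<open>Position (0-based) of qubit j in the ordering of the qubits.\<close>
definition qpos :: "'n::{finite,linorder} \<Rightarrow> nat" where
  "qpos j = card {k. k < j}"

end

(* A stabilizer state is C0|0^n> up to phase, so the Clifford circuit C0^dagger sends psi to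
   |0^n>.  Conjugation by a Clifford circuit permutes the Weyl operators up to sign; the induced
   map on labels is injective and F_2-linear, and it carries Weyl(psi) onto
   Weyl(|0^n>) = 0^n x F_2^n.  The image of T is therefore an (n-t)-dimensional subspace of
   0^n x F_2^n.  CNOT gates fix |0^n> and act on 0^n x F_2^n by the row operations
   z_j := z_j + z_k, so Gaussian elimination with CNOTs moves this subspace onto the span of the
   last n-t unit vectors. *)

theory Submission
  imports Defs
begin

definition scale_op :: "complex \<Rightarrow> complex^'a^'a \<Rightarrow> complex^'a^'a" where
  "scale_op k M = (\<chi> r c. k * M $ r $ c)"

lemma scale_op_entry [simp]: "scale_op k M $ r $ c = k * M $ r $ c"
  by (simp add: scale_op_def)

lemma scale_op_mult_left: "scale_op k A ** B = scale_op k (A ** B)"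
  by (simp add: vec_eq_iff matrix_matrix_mult_def sum_distrib_left mult.assoc)

lemma scale_op_mult_right: "A ** scale_op k B = scale_op k (A ** B)"
  by (simp add: vec_eq_iff matrix_matrix_mult_def sum_distrib_left mult.left_commute)

lemma scale_op_scale_op: "scale_op k (scale_op l A) = scale_op (k * l) A"
  by (simp add: vec_eq_iff mult.assoc)

lemma scale_op_one [simp]: "scale_op 1 A = A"
  by (simp add: vec_eq_iff)

lemma scale_op_minus_one: "scale_op (-1) A = - A"
  by (simp add: vec_eq_iff)

lemma scale_op_mult_vec: "scale_op k M *v v = k *s (M *v v)"
  by (simp add: vec_eq_iff matrix_vector_mult_def sum_distrib_left mult.assoc)

lemma adjoint_op_entry [simp]: "adjoint_op A $ i $ j = cnj (A $ j $ i)"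
  by (simp add: adjoint_op_def)

lemma adjoint_op_mult: "adjoint_op (A ** B) = adjoint_op B ** adjoint_op A"
  by (simp add: vec_eq_iff matrix_matrix_mult_def mult.commute)

lemma adjoint_op_adjoint_op [simp]: "adjoint_op (adjoint_op A) = A"
  by (simp add: vec_eq_iff)

lemma adjoint_op_mat_one [simp]: "adjoint_op (mat 1 :: complex^'a^'a) = mat 1"
  by (simp add: vec_eq_iff mat_def)

definition unitary_op :: "complex^'a^'a \<Rightarrow> bool" where
  "unitary_op U \<longleftrightarrow> U ** adjoint_op U = mat 1 \<and> adjoint_op U ** U = mat 1"

lemma unitary_op_mat_one: "unitary_op (mat 1)"
  by (simp add: unitary_op_def)

lemma unitary_op_mult: "unitary_op A \<Longrightarrow> unitary_op B \<Longrightarrow> unitary_op (A ** B)"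
  unfolding unitary_op_def adjoint_op_mult by (metis matrix_mul_assoc matrix_mul_rid)

lemma unitary_op_adjoint_op: "unitary_op U \<Longrightarrow> unitary_op (adjoint_op U)"
  by (simp add: unitary_op_def)

lemma prod_if_zero:
  "(\<Prod>j\<in>(UNIV::'a::finite set). if P j then f j else 0) =
     (if \<forall>j. P j then \<Prod>j\<in>UNIV. f j else (0::'b::comm_semiring_1))"
proof (cases "\<forall>j. P j")
  case False
  then obtain x where "\<not> P x" by blast
  then have "(\<Prod>j\<in>UNIV. if P j then f j else 0) = 0"
    by (intro prod_zero) auto
  then show ?thesis by (simp only: if_not_P[OF False])
qed simp

lemma prod_if_one: "(\<Prod>j\<in>(UNIV::'a::finite set). if P j then a else 1) = a ^ card {j. P j}"
  by (simp add: prod.If_cases Int_def)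

section \<open>Tensor products of single-qubit operators\<close>

lemma tensor_entry: "tensor U $ r $ c = (\<Prod>j\<in>UNIV. U j $ r j $ c j)"
  by (simp add: tensor_def)

lemma tensor_mult: "tensor U ** tensor V = tensor (\<lambda>j. U j ** V j)"
proof -
  have "(\<Sum>p\<in>UNIV. (\<Prod>j\<in>UNIV. U j $ r j $ p j) * (\<Prod>j\<in>UNIV. V j $ p j $ c j))
        = (\<Prod>j\<in>UNIV. \<Sum>b\<in>UNIV. U j $ r j $ b * V j $ b $ c j)" for r c :: "'a \<Rightarrow> bool"
  proof -
    have "(\<Prod>j\<in>UNIV. \<Sum>b\<in>UNIV. U j $ r j $ b * V j $ b $ c j)
       = (\<Sum>g\<in>PiE UNIV (\<lambda>_. UNIV). \<Prod>j\<in>UNIV. U j $ r j $ g j * V j $ g j $ c j)"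
      by (rule prod_sum_PiE) auto
    also have "\<dots> = (\<Sum>p\<in>UNIV. (\<Prod>j\<in>UNIV. U j $ r j $ p j) * (\<Prod>j\<in>UNIV. V j $ p j $ c j))"
      by (simp add: PiE_UNIV_domain prod.distrib)
    finally show ?thesis by simp
  qed
  then show ?thesis
    by (simp add: vec_eq_iff matrix_matrix_mult_def tensor_entry)
qed

lemma tensor_adjoint: "adjoint_op (tensor U) = tensor (\<lambda>j. adjoint_op (U j))"
  by (simp add: vec_eq_iff tensor_entry)

lemma pauliI_eq_mat_one: "pauliI = mat 1"
  by (simp add: vec_eq_iff pauliI_def mat_def)

lemma tensor_pauliI: "tensor (\<lambda>_. pauliI) = mat 1"
  by (simp add: vec_eq_iff tensor_entry pauliI_def mat_def prod_if_zero fun_eq_iff)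

lemma tensor_scale_factor: "tensor (U(j := scale_op s A)) = scale_op s (tensor (U(j := A)))"
proof -
  have "(\<Prod>k\<in>UNIV. (U(j := B)) k $ r k $ c k) = B $ r j $ c j * (\<Prod>k\<in>UNIV-{j}. U k $ r k $ c k)"
    for B r c
  proof -
    have "(\<Prod>k\<in>UNIV-{j}. (U(j := B)) k $ r k $ c k) = (\<Prod>k\<in>UNIV-{j}. U k $ r k $ c k)"
      by (rule prod.cong) auto
    then show ?thesis
      using prod.remove[of UNIV j "\<lambda>k. (U(j := B)) k $ r k $ c k"] by simp
  qed
  then show ?thesis
    by (simp add: vec_eq_iff tensor_entry mult.assoc del: fun_upd_apply)
qed

lemma on_qubit_mult: "on_qubit j G ** on_qubit j G' = on_qubit j (G ** G')"
  unfolding on_qubit_def tensor_mult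
  by (rule arg_cong[where f=tensor]) (auto simp: pauliI_eq_mat_one)

lemma on_qubit_adjoint: "adjoint_op (on_qubit j G) = on_qubit j (adjoint_op G)"
  unfolding on_qubit_def tensor_adjoint
  by (rule arg_cong[where f=tensor]) (auto simp: pauliI_eq_mat_one)

lemma on_qubit_pauliI: "on_qubit j pauliI = mat 1"
  unfolding on_qubit_def by (simp add: tensor_pauliI)

lemma on_qubit_conj:
  "on_qubit j G ** tensor P ** adjoint_op (on_qubit j G) = tensor (P(j := G ** P j ** adjoint_op G))"
  unfolding on_qubit_adjoint unfolding on_qubit_def tensor_mult
  by (rule arg_cong[where f=tensor]) (auto simp: pauliI_eq_mat_one)

lemma qop1_eq_iff: "(A::qop1) = B \<longleftrightarrow> (\<forall>r c. A $ r $ c = B $ r $ c)"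
  by (simp add: vec_eq_iff)

lemma qop1_mult_entry:
  "((A::qop1) ** B) $ r $ c = A $ r $ True * B $ True $ c + A $ r $ False * B $ False $ c"
  by (simp add: matrix_matrix_mult_def UNIV_bool)

lemma sqrt2_mult_sqrt2: "complex_of_real (sqrt 2) * complex_of_real (sqrt 2) = 2"
  by (simp flip: of_real_mult)

lemma adjoint_hadamard: "adjoint_op hadamard = hadamard"
  by (simp add: qop1_eq_iff hadamard_def)

lemma hadamard_mult_hadamard: "hadamard ** hadamard = pauliI"
  by (simp add: qop1_eq_iff qop1_mult_entry hadamard_def pauliI_def all_bool_eq
      field_simps sqrt2_mult_sqrt2)

lemma adjoint_phaseS: "adjoint_op phaseS = phaseS ** phaseS ** phaseS"
  by (simp add: qop1_eq_iff qop1_mult_entry phaseS_def all_bool_eq)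

lemma phaseS_mult_adjoint: "phaseS ** adjoint_op phaseS = pauliI"
  by (simp add: qop1_eq_iff qop1_mult_entry phaseS_def pauliI_def all_bool_eq)

lemma adjoint_mult_phaseS: "adjoint_op phaseS ** phaseS = pauliI"
  by (simp add: qop1_eq_iff qop1_mult_entry phaseS_def pauliI_def all_bool_eq)

lemma unitary_op_hadamard: "unitary_op (on_qubit j hadamard)"
  by (simp add: unitary_op_def on_qubit_adjoint on_qubit_mult adjoint_hadamard
      hadamard_mult_hadamard on_qubit_pauliI)

lemma unitary_op_phaseS: "unitary_op (on_qubit j phaseS)"
  by (simp add: unitary_op_def on_qubit_adjoint on_qubit_mult phaseS_mult_adjoint
      adjoint_mult_phaseS on_qubit_pauliI)

section \<open>Weyl operators\<close>

(* The single-qubit factor i^(ab) X^a Z^b of a Weyl operator. *)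
definition weyl1 :: "bool \<Rightarrow> bool \<Rightarrow> qop1" where
  "weyl1 a b = (\<chi> r c. (if a \<and> b then \<i> else 1) * (if r = (c \<noteq> a) then (if b \<and> c then -1 else 1) else 0))"

lemma weyl1_entry:
  "weyl1 a b $ r $ c = (if a \<and> b then \<i> else 1) * (if r = (c \<noteq> a) then (if b \<and> c then -1 else 1) else 0)"
  by (simp add: weyl1_def)

lemma weyl_eq_tensor: "weyl x = tensor (\<lambda>j. weyl1 (xpart x j) (zpart x j))"
proof -
  have XZ: "((if a then pauliX else pauliI) ** (if b then pauliZ else pauliI)) $ r $ c
      = (if r = (c \<noteq> a) then (if b \<and> c then -1 else 1) else 0)" for a b r c
    by (cases a; cases b; cases r; cases c)
       (simp_all add: qop1_mult_entry pauliX_def pauliZ_def pauliI_def)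
  have "\<i> ^ card {j. xpart x j \<and> zpart x j} = (\<Prod>j\<in>UNIV. if xpart x j \<and> zpart x j then \<i> else 1)"
    by (simp add: prod_if_one)
  then show ?thesis
    by (simp add: vec_eq_iff weyl_def tensor_entry XZ weyl1_entry prod.distrib)
qed

lemma weyl_entry:
  "weyl x $ r $ c = (if r = (\<lambda>j. c j \<noteq> xpart x j)
     then \<i> ^ card {j. xpart x j \<and> zpart x j} * (-1) ^ card {j. zpart x j \<and> c j} else 0)"
proof -
  have "weyl x $ r $ c = (\<Prod>j\<in>UNIV. if xpart x j \<and> zpart x j then \<i> else 1) *
      (\<Prod>j\<in>UNIV. if r j = (c j \<noteq> xpart x j) then if zpart x j \<and> c j then -1 else 1 else 0)"
    by (simp add: weyl_eq_tensor tensor_entry weyl1_entry prod.distrib)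
  also have "\<dots> = \<i> ^ card {j. xpart x j \<and> zpart x j} *
      (if \<forall>j. r j = (c j \<noteq> xpart x j) then (-1) ^ card {j. zpart x j \<and> c j} else 0)"
    by (simp only: prod_if_zero prod_if_one)
  finally show ?thesis
    unfolding fun_eq_iff by simp
qed

lemma xpart_zpart_eqI:
  assumes "xpart y = xpart y'" and "zpart y = zpart y'"
  shows "y = y'"
proof -
  have bit_eqI: "(a::bit) = b" if "(a = 1) = (b = 1)" for a b
    using that by (cases a; cases b) simp_all
  have "y $ i = y' $ i" for i
  proof (cases i)
    case (Inl j)
    then show ?thesis
      using fun_cong[OF assms(1), of j] by (intro bit_eqI) (simp add: xpart_def)
  next
    case (Inr j)
    then show ?thesis
      using fun_cong[OF assms(2), of j] by (intro bit_eqI) (simp add: zpart_def)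
  qed
  then show ?thesis
    by (simp add: vec_eq_iff)
qed

(* The support of W_y determines the x-part; comparing the entries in the columns 0 and e_m
   determines the z-part at m. *)
lemma weyl_eq_scale_imp_eq:
  assumes eq: "weyl y = scale_op s (weyl y')" and "s \<noteq> 0"
  shows "y = y'"
proof -
  have entry: "weyl y $ r $ c = s * weyl y' $ r $ c" for r c
    using eq by simp
  have "weyl y $ xpart y $ (\<lambda>_. False) \<noteq> 0"
    by (simp add: weyl_entry)
  then have "weyl y' $ xpart y $ (\<lambda>_. False) \<noteq> 0"
    using entry by auto
  then have x_eq: "xpart y' = xpart y"
    by (simp add: weyl_entry split: if_splits)
  have "zpart y m = zpart y' m" for m
  proof -
    let ?N = "\<lambda>y. \<i> ^ card {j. xpart y j \<and> zpart y j}"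
    have "?N y = s * ?N y'"
      using entry[of "xpart y" "\<lambda>_. False"] x_eq by (simp add: weyl_entry)
    moreover have "?N y * (if zpart y m then -1 else 1) = s * ?N y' * (if zpart y' m then -1 else 1)"
      using entry[of "\<lambda>j. (j = m) \<noteq> xpart y j" "\<lambda>j. j = m"] x_eq
      by (cases "zpart y m"; cases "zpart y' m") (simp_all add: weyl_entry Collect_conv_if)
    ultimately show ?thesis
      by (auto split: if_splits)
  qed
  then show ?thesis
    using x_eq by (intro xpart_zpart_eqI) auto
qed

lemma weyl_mult_ket0:
  "weyl x *v ket0 = (\<chi> r. if r = xpart x then \<i> ^ card {j. xpart x j \<and> zpart x j} else 0)"
proof -
  have "(weyl x *v ket0) $ r = weyl x $ r $ (\<lambda>_. False)" for r
    by (simp add: matrix_vector_mult_def ket0_def if_distrib cong: if_cong)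
  then show ?thesis
    by (simp add: vec_eq_iff weyl_entry)
qed

section \<open>Conjugation of Weyl operators by gates\<close>

definition hadamard_act :: "'n \<Rightarrow> bit ^ ('n + 'n) \<Rightarrow> bit ^ ('n::finite + 'n)" where
  "hadamard_act j x = (\<chi> i. case i of
      Inl k \<Rightarrow> if k = j then x $ Inr j else x $ Inl k
    | Inr k \<Rightarrow> if k = j then x $ Inl j else x $ Inr k)"

definition phase_act :: "'n \<Rightarrow> bit ^ ('n + 'n) \<Rightarrow> bit ^ ('n::finite + 'n)" where
  "phase_act j x = (\<chi> i. case i of
      Inl k \<Rightarrow> x $ Inl k
    | Inr k \<Rightarrow> if k = j then x $ Inr j + x $ Inl j else x $ Inr k)"

definition cnot_act :: "'n \<Rightarrow> 'n \<Rightarrow> bit ^ ('n + 'n) \<Rightarrow> bit ^ ('n::finite + 'n)" where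
  "cnot_act j k x = (\<chi> i. case i of
      Inl l \<Rightarrow> if l = k then x $ Inl k + x $ Inl j else x $ Inl l
    | Inr l \<Rightarrow> if l = j then x $ Inr j + x $ Inr k else x $ Inr l)"

lemma bit_add_eq_one_iff: "(a::bit) + b = 1 \<longleftrightarrow> (a = 1) \<noteq> (b = 1)"
  by (cases a; cases b) simp_all

lemma parts_hadamard_act:
  "xpart (hadamard_act j x) k = (if k = j then zpart x j else xpart x k)"
  "zpart (hadamard_act j x) k = (if k = j then xpart x j else zpart x k)"
  by (simp_all add: hadamard_act_def xpart_def zpart_def)

lemma parts_phase_act:
  "xpart (phase_act j x) k = xpart x k"
  "zpart (phase_act j x) k = (if k = j then xpart x j \<noteq> zpart x j else zpart x k)"
  by (auto simp add: phase_act_def xpart_def zpart_def bit_add_eq_one_iff)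

lemma parts_cnot_act:
  "xpart (cnot_act j k x) l = (if l = k then xpart x k \<noteq> xpart x j else xpart x l)"
  "zpart (cnot_act j k x) l = (if l = j then zpart x j \<noteq> zpart x k else zpart x l)"
  by (auto simp add: cnot_act_def xpart_def zpart_def bit_add_eq_one_iff)

abbreviation linear_F2 :: "(bit ^ 'm \<Rightarrow> bit ^ 'm) \<Rightarrow> bool" where
  "linear_F2 \<equiv> Vector_Spaces.linear (*s) (*s)"

lemma linear_F2I:
  assumes "\<And>x y. f (x + y) = f x + f y" and "\<And>c x. f (c *s x) = c *s f x"
  shows "linear_F2 f"
  unfolding Vector_Spaces.linear_iff using assms vec.vector_space_axioms by blast

lemma linear_hadamard_act: "linear_F2 (hadamard_act j)"
  by (rule linear_F2I) (auto simp: hadamard_act_def vec_eq_iff split: sum.splits)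

lemma linear_phase_act: "linear_F2 (phase_act j)"
  by (rule linear_F2I) (auto simp: phase_act_def vec_eq_iff algebra_simps split: sum.splits)

lemma linear_cnot_act: "linear_F2 (cnot_act j k)"
  by (rule linear_F2I) (auto simp: cnot_act_def vec_eq_iff algebra_simps split: sum.splits)

lemma hadamard_act_hadamard_act: "hadamard_act j (hadamard_act j x) = x"
  by (auto simp: hadamard_act_def vec_eq_iff split: sum.splits)

lemma phase_act_phase_act: "phase_act j (phase_act j x) = x"
  by (auto simp: phase_act_def vec_eq_iff add.assoc split: sum.splits)

lemma cnot_act_cnot_act: "j \<noteq> k \<Longrightarrow> cnot_act j k (cnot_act j k x) = x"
  by (auto simp: cnot_act_def vec_eq_iff add.assoc split: sum.splits)

definition weyl_conj :: "'n::finite qop \<Rightarrow> bit ^ ('n + 'n) \<Rightarrow> bit ^ ('n + 'n) \<Rightarrow> bool" where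
  "weyl_conj C x y \<longleftrightarrow>
     C ** weyl x ** adjoint_op C = weyl y \<or> C ** weyl x ** adjoint_op C = - weyl y"

lemma weyl_conj_iff_scale:
  "weyl_conj C x y \<longleftrightarrow> (\<exists>e. (e = 1 \<or> e = -1) \<and> C ** weyl x ** adjoint_op C = scale_op e (weyl y))"
  unfolding weyl_conj_def by (auto simp: scale_op_minus_one)

lemma weyl_conjI:
  "C ** weyl x ** adjoint_op C = scale_op (if P then -1 else 1) (weyl y) \<Longrightarrow> weyl_conj C x y"
  unfolding weyl_conj_iff_scale by (cases P) auto

lemma hadamard_conj_weyl1:
  "hadamard ** weyl1 a b ** adjoint_op hadamard = scale_op (if a \<and> b then -1 else 1) (weyl1 b a)"
  by (cases a; cases b)
     (simp_all add: adjoint_hadamard qop1_eq_iff qop1_mult_entry hadamard_def weyl1_entry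
       all_bool_eq field_simps sqrt2_mult_sqrt2)

lemma phaseS_conj_weyl1:
  "phaseS ** weyl1 a b ** adjoint_op phaseS = scale_op (if a \<and> b then -1 else 1) (weyl1 a (a \<noteq> b))"
  by (cases a; cases b) (simp_all add: qop1_eq_iff qop1_mult_entry phaseS_def weyl1_entry all_bool_eq)

lemma weyl_conj_hadamard: "weyl_conj (on_qubit j hadamard) x (hadamard_act j x)"
proof (rule weyl_conjI)
  show "on_qubit j hadamard ** weyl x ** adjoint_op (on_qubit j hadamard) =
    scale_op (if xpart x j \<and> zpart x j then -1 else 1) (weyl (hadamard_act j x))"
    unfolding weyl_eq_tensor on_qubit_conj hadamard_conj_weyl1 tensor_scale_factor
    by (intro arg_cong[where f="scale_op _"] arg_cong[where f=tensor])
       (auto simp: parts_hadamard_act)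
qed

lemma weyl_conj_phaseS: "weyl_conj (on_qubit j phaseS) x (phase_act j x)"
proof (rule weyl_conjI)
  show "on_qubit j phaseS ** weyl x ** adjoint_op (on_qubit j phaseS) =
    scale_op (if xpart x j \<and> zpart x j then -1 else 1) (weyl (phase_act j x))"
    unfolding weyl_eq_tensor on_qubit_conj phaseS_conj_weyl1 tensor_scale_factor
    by (intro arg_cong[where f="scale_op _"] arg_cong[where f=tensor])
       (auto simp: parts_phase_act)
qed

definition cnot_flip :: "'n \<Rightarrow> 'n \<Rightarrow> ('n \<Rightarrow> bool) \<Rightarrow> ('n \<Rightarrow> bool)" where
  "cnot_flip j k c = c(k := (c k \<noteq> c j))"

lemma cnot_flip_eq_iff: "j \<noteq> k \<Longrightarrow> r = cnot_flip j k c \<longleftrightarrow> c = cnot_flip j k r"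
  by (auto simp: cnot_flip_def fun_eq_iff)

lemma cnot_entry: "cnot j k $ r $ c = (if r = cnot_flip j k c then 1 else 0)"
  by (simp add: cnot_def cnot_flip_def)

lemma adjoint_cnot: "j \<noteq> k \<Longrightarrow> adjoint_op (cnot j k) = cnot j k"
  by (auto simp: vec_eq_iff cnot_entry cnot_flip_eq_iff)

lemma cnot_mult_entry:
  assumes "j \<noteq> k"
  shows "(cnot j k ** M) $ r $ c = M $ cnot_flip j k r $ c"
proof -
  have "(cnot j k ** M) $ r $ c = (\<Sum>p\<in>UNIV. if p = cnot_flip j k r then M $ p $ c else 0)"
    unfolding matrix_matrix_mult_def using assms
    by (simp only: vec_lambda_beta) (rule sum.cong, auto simp: cnot_entry cnot_flip_eq_iff)
  then show ?thesis by simp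
qed

lemma mult_cnot_entry: "(M ** cnot j k) $ r $ c = M $ r $ cnot_flip j k c"
proof -
  have "(M ** cnot j k) $ r $ c = (\<Sum>p\<in>UNIV. if p = cnot_flip j k c then M $ r $ p else 0)"
    unfolding matrix_matrix_mult_def
    by (simp only: vec_lambda_beta) (rule sum.cong, auto simp: cnot_entry)
  then show ?thesis by simp
qed

lemma cnot_mult_vec:
  assumes "j \<noteq> k"
  shows "(cnot j k *v v) $ r = v $ cnot_flip j k r"
proof -
  have "(cnot j k *v v) $ r = (\<Sum>p\<in>UNIV. if p = cnot_flip j k r then v $ p else 0)"
    unfolding matrix_vector_mult_def using assms
    by (simp only: vec_lambda_beta) (rule sum.cong, auto simp: cnot_entry cnot_flip_eq_iff)
  then show ?thesis by simp
qed

lemma cnot_mult_cnot: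
  assumes "j \<noteq> k"
  shows "cnot j k ** cnot j k = mat 1"
proof -
  have "cnot_flip j k r = cnot_flip j k c \<longleftrightarrow> r = c" for r c
    using cnot_flip_eq_iff[OF assms] by metis
  then show ?thesis
    by (simp add: vec_eq_iff cnot_mult_entry[OF assms] cnot_entry mat_def)
qed

lemma unitary_op_cnot: "j \<noteq> k \<Longrightarrow> unitary_op (cnot j k)"
  by (simp add: unitary_op_def adjoint_cnot cnot_mult_cnot)

lemma prod_UNIV_remove2:
  "j \<noteq> k \<Longrightarrow> (\<Prod>l\<in>(UNIV::'a::finite set). f l) = f j * f k * (\<Prod>l\<in>UNIV - {j, k}. f l)"
  by (simp add: prod.remove[of _ j] prod.remove[of _ k] Diff_insert2[symmetric] insert_commute
      mult.assoc)

(* The two-qubit core of the CNOT conjugation rule; all other tensor factors are untouched. *)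
lemma weyl1_cnot_pair:
  "weyl1 aj bj $ rj $ cj * weyl1 ak bk $ (rk \<noteq> rj) $ (ck \<noteq> cj) =
   (if aj \<and> bk \<and> (bj = ak) then -1 else 1) * (weyl1 aj (bj \<noteq> bk) $ rj $ cj * weyl1 (ak \<noteq> aj) bk $ rk $ ck)"
  by (cases aj; cases bj; cases ak; cases bk; cases rj; cases rk; cases cj; cases ck)
     (simp_all add: weyl1_entry)

lemma weyl_conj_cnot:
  assumes "j \<noteq> k"
  shows "weyl_conj (cnot j k) x (cnot_act j k x)"
proof (rule weyl_conjI)
  let ?s = "if xpart x j \<and> zpart x k \<and> (zpart x j = xpart x k) then -1 else (1::complex)"
  let ?f = "\<lambda>r c l. weyl1 (xpart x l) (zpart x l) $ cnot_flip j k r l $ cnot_flip j k c l"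
  let ?g = "\<lambda>r c l. weyl1 (xpart (cnot_act j k x) l) (zpart (cnot_act j k x) l) $ r l $ c l"
  have "(\<Prod>l\<in>UNIV. ?f r c l) = ?s * (\<Prod>l\<in>UNIV. ?g r c l)" for r c
  proof -
    have rest: "(\<Prod>l\<in>UNIV - {j, k}. ?f r c l) = (\<Prod>l\<in>UNIV - {j, k}. ?g r c l)"
      by (rule prod.cong) (auto simp: cnot_flip_def parts_cnot_act)
    have "?f r c j * ?f r c k = ?s * (?g r c j * ?g r c k)"
      using weyl1_cnot_pair[of "xpart x j" "zpart x j" "r j" "c j" "xpart x k" "zpart x k" "r k" "c k"] assms
      by (simp add: cnot_flip_def parts_cnot_act)
    then show ?thesis
      by (simp add: prod_UNIV_remove2[OF assms, of "?f r c"] prod_UNIV_remove2[OF assms, of "?g r c"]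
          rest mult.assoc)
  qed
  then show "cnot j k ** weyl x ** adjoint_op (cnot j k) = scale_op ?s (weyl (cnot_act j k x))"
    by (simp add: vec_eq_iff adjoint_cnot[OF assms] mult_cnot_entry
        cnot_mult_entry[OF assms] weyl_eq_tensor tensor_entry)
qed

section \<open>Clifford circuits acting on Weyl labels\<close>

lemma clifford_circuits_mult:
  "A \<in> clifford_circuits \<Longrightarrow> B \<in> clifford_circuits \<Longrightarrow> A ** B \<in> clifford_circuits"
  by (induction rule: clifford_circuits.induct)
     (auto simp flip: matrix_mul_assoc intro: clifford_circuits.intros)

lemma hadamard_in_clifford_circuits: "on_qubit j hadamard \<in> clifford_circuits"
  using clifford_circuits.H_gate[OF clifford_circuits.id_circ] by simp

lemma phaseS_in_clifford_circuits: "on_qubit j phaseS \<in> clifford_circuits"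
  using clifford_circuits.S_gate[OF clifford_circuits.id_circ] by simp

lemma cnot_in_clifford_circuits: "j \<noteq> k \<Longrightarrow> cnot j k \<in> clifford_circuits"
  using clifford_circuits.CNOT_gate[OF clifford_circuits.id_circ] by simp

lemma adjoint_in_clifford_circuits:
  "C \<in> clifford_circuits \<Longrightarrow> adjoint_op C \<in> clifford_circuits"
proof (induction rule: clifford_circuits.induct)
  case id_circ
  then show ?case by (simp add: clifford_circuits.id_circ)
next
  case (H_gate C j)
  then show ?case
    by (simp add: adjoint_op_mult on_qubit_adjoint adjoint_hadamard clifford_circuits_mult
        hadamard_in_clifford_circuits)
next
  case (S_gate C j)
  have "adjoint_op (on_qubit j phaseS) = on_qubit j phaseS ** on_qubit j phaseS ** on_qubit j phaseS"
    by (simp add: on_qubit_adjoint adjoint_phaseS on_qubit_mult)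
  with S_gate show ?case
    by (simp add: adjoint_op_mult clifford_circuits_mult phaseS_in_clifford_circuits)
next
  case (CNOT_gate C j k)
  then show ?case
    by (simp add: adjoint_op_mult adjoint_cnot clifford_circuits_mult cnot_in_clifford_circuits)
qed

lemma unitary_op_clifford_circuit: "C \<in> clifford_circuits \<Longrightarrow> unitary_op C"
proof (induction rule: clifford_circuits.induct)
  case id_circ
  show ?case by (rule unitary_op_mat_one)
next
  case (H_gate C j)
  show ?case by (rule unitary_op_mult[OF unitary_op_hadamard H_gate.IH])
next
  case (S_gate C j)
  show ?case by (rule unitary_op_mult[OF unitary_op_phaseS S_gate.IH])
next
  case (CNOT_gate C j k)
  show ?case by (rule unitary_op_mult[OF unitary_op_cnot[OF CNOT_gate.hyps(2)] CNOT_gate.IH])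
qed

lemma weyl_conj_unique:
  assumes "weyl_conj C x y" and "weyl_conj C x y'"
  shows "y = y'"
proof -
  have "weyl y = scale_op 1 (weyl y') \<or> weyl y = scale_op (-1) (weyl y')"
    using assms unfolding weyl_conj_def scale_op_minus_one scale_op_one by auto
  then show ?thesis
    using weyl_eq_scale_imp_eq[of y 1 y'] weyl_eq_scale_imp_eq[of y "-1" y'] by auto
qed

lemma clifford_act_eqI: "weyl_conj C x y \<Longrightarrow> clifford_act C x = y"
  unfolding clifford_act_def
  by (rule the_equality) (auto simp: weyl_conj_def[symmetric] intro: weyl_conj_unique)

lemma weyl_conj_mat_one: "weyl_conj (mat 1) x x"
  by (simp add: weyl_conj_def)

lemma weyl_conj_mult:
  assumes "weyl_conj C x y" and "weyl_conj G y z"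
  shows "weyl_conj (G ** C) x z"
proof -
  obtain e e' where e: "e = 1 \<or> e = -1" "C ** weyl x ** adjoint_op C = scale_op e (weyl y)"
    and e': "e' = 1 \<or> e' = -1" "G ** weyl y ** adjoint_op G = scale_op e' (weyl z)"
    using assms unfolding weyl_conj_iff_scale by blast
  have "(G ** C) ** weyl x ** adjoint_op (G ** C) = G ** (C ** weyl x ** adjoint_op C) ** adjoint_op G"
    by (simp add: adjoint_op_mult matrix_mul_assoc)
  also have "\<dots> = scale_op e (G ** weyl y ** adjoint_op G)"
    by (simp add: e(2) scale_op_mult_left scale_op_mult_right)
  also have "\<dots> = scale_op (e * e') (weyl z)"
    by (simp add: e'(2) scale_op_scale_op)
  finally show ?thesis
    unfolding weyl_conj_iff_scale using e(1) e'(1) by (intro exI[of _ "e * e'"]) auto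
qed

lemma weyl_conj_adjoint:
  assumes "unitary_op C" and "weyl_conj C x y"
  shows "weyl_conj (adjoint_op C) y x"
proof -
  obtain e where e: "e = 1 \<or> e = -1" "C ** weyl x ** adjoint_op C = scale_op e (weyl y)"
    using assms(2) unfolding weyl_conj_iff_scale by blast
  have CC: "adjoint_op C ** C = mat 1"
    using assms(1) by (simp add: unitary_op_def)
  have "weyl y = scale_op e (C ** weyl x ** adjoint_op C)"
    using e by (auto simp: scale_op_scale_op)
  then have "adjoint_op C ** weyl y ** C = scale_op e (weyl x)"
    by (simp add: scale_op_mult_left scale_op_mult_right matrix_mul_assoc CC)
       (simp flip: matrix_mul_assoc add: CC)
  then show ?thesis
    unfolding weyl_conj_iff_scale using e(1) by auto
qed

lemma weyl_conj_clifford_act: "C \<in> clifford_circuits \<Longrightarrow> weyl_conj C x (clifford_act C x)"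
proof (induction arbitrary: x rule: clifford_circuits.induct)
  have step: "weyl_conj G (clifford_act C x) z \<Longrightarrow> weyl_conj C x (clifford_act C x) \<Longrightarrow>
      weyl_conj (G ** C) x (clifford_act (G ** C) x)" for G C z and x :: "bit ^ ('a + 'a)"
    by (metis clifford_act_eqI weyl_conj_mult)
  {
    case id_circ
    show ?case by (metis clifford_act_eqI weyl_conj_mat_one)
  next
    case (H_gate C j)
    show ?case by (rule step[OF weyl_conj_hadamard H_gate.IH])
  next
    case (S_gate C j)
    show ?case by (rule step[OF weyl_conj_phaseS S_gate.IH])
  next
    case (CNOT_gate C j k)
    show ?case by (rule step[OF weyl_conj_cnot[OF CNOT_gate.hyps(2)] CNOT_gate.IH])
  }
qed

lemma clifford_act_mult:
  assumes "A \<in> clifford_circuits" and "B \<in> clifford_circuits"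
  shows "clifford_act (A ** B) = clifford_act A \<circ> clifford_act B"
proof
  fix x
  have "weyl_conj (A ** B) x (clifford_act A (clifford_act B x))"
    by (rule weyl_conj_mult[OF weyl_conj_clifford_act[OF assms(2)] weyl_conj_clifford_act[OF assms(1)]])
  then show "clifford_act (A ** B) x = (clifford_act A \<circ> clifford_act B) x"
    by (simp add: clifford_act_eqI)
qed

lemma clifford_act_mat_one: "clifford_act (mat 1) = id"
  by (rule ext) (simp add: clifford_act_eqI weyl_conj_mat_one)

lemma clifford_act_hadamard: "clifford_act (on_qubit j hadamard) = hadamard_act j"
  by (rule ext) (rule clifford_act_eqI[OF weyl_conj_hadamard])

lemma clifford_act_phaseS: "clifford_act (on_qubit j phaseS) = phase_act j"
  by (rule ext) (rule clifford_act_eqI[OF weyl_conj_phaseS])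

lemma clifford_act_cnot: "j \<noteq> k \<Longrightarrow> clifford_act (cnot j k) = cnot_act j k"
  by (rule ext) (rule clifford_act_eqI[OF weyl_conj_cnot])

lemma clifford_act_gate_mult:
  "C \<in> clifford_circuits \<Longrightarrow> clifford_act (on_qubit j hadamard ** C) = hadamard_act j \<circ> clifford_act C"
  "C \<in> clifford_circuits \<Longrightarrow> clifford_act (on_qubit j phaseS ** C) = phase_act j \<circ> clifford_act C"
  "C \<in> clifford_circuits \<Longrightarrow> j \<noteq> k \<Longrightarrow> clifford_act (cnot j k ** C) = cnot_act j k \<circ> clifford_act C"
  by (simp_all add: clifford_act_mult hadamard_in_clifford_circuits phaseS_in_clifford_circuits
      cnot_in_clifford_circuits clifford_act_hadamard clifford_act_phaseS clifford_act_cnot)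

lemma linear_clifford_act: "C \<in> clifford_circuits \<Longrightarrow> linear_F2 (clifford_act C)"
proof (induction rule: clifford_circuits.induct)
  case id_circ
  show ?case unfolding clifford_act_mat_one by (rule vec.linear_id)
next
  case (H_gate C j)
  show ?case unfolding clifford_act_gate_mult(1)[OF H_gate.hyps]
    by (rule Vector_Spaces.linear_compose[OF H_gate.IH linear_hadamard_act])
next
  case (S_gate C j)
  show ?case unfolding clifford_act_gate_mult(2)[OF S_gate.hyps]
    by (rule Vector_Spaces.linear_compose[OF S_gate.IH linear_phase_act])
next
  case (CNOT_gate C j k)
  show ?case unfolding clifford_act_gate_mult(3)[OF CNOT_gate.hyps]
    by (rule Vector_Spaces.linear_compose[OF CNOT_gate.IH linear_cnot_act])
qed

lemma inj_clifford_act: "C \<in> clifford_circuits \<Longrightarrow> inj (clifford_act C)"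
proof (induction rule: clifford_circuits.induct)
  case id_circ
  show ?case by (simp add: clifford_act_mat_one)
next
  case (H_gate C j)
  show ?case unfolding clifford_act_gate_mult(1)[OF H_gate.hyps]
    by (rule inj_compose[OF _ H_gate.IH]) (metis injI hadamard_act_hadamard_act)
next
  case (S_gate C j)
  show ?case unfolding clifford_act_gate_mult(2)[OF S_gate.hyps]
    by (rule inj_compose[OF _ S_gate.IH]) (metis injI phase_act_phase_act)
next
  case (CNOT_gate C j k)
  show ?case unfolding clifford_act_gate_mult(3)[OF CNOT_gate.hyps]
    by (rule inj_compose[OF _ CNOT_gate.IH]) (metis injI cnot_act_cnot_act CNOT_gate.hyps(2))
qed

lemma clifford_act_subspace:
  assumes "C \<in> clifford_circuits" and "vec.subspace T"
  shows "vec.subspace (clifford_act C ` T)" and "vec.dim (clifford_act C ` T) = vec.dim T"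
  using vec.linear_subspace_image[OF linear_clifford_act[OF assms(1)] assms(2)]
    vec.dim_image_eq[OF linear_clifford_act[OF assms(1)] inj_on_subset[OF inj_clifford_act[OF assms(1)]]]
  by simp_all

lemma Weyl_set_iff: "x \<in> Weyl_set \<psi> \<longleftrightarrow> (\<exists>d. (d = 1 \<or> d = -1) \<and> weyl x *v \<psi> = d *s \<psi>)"
  unfolding Weyl_set_def by (auto simp: vec_eq_iff)

lemma adjoint_mult_vec_eq:
  assumes "unitary_op C" and "C *v \<psi> = w *s \<phi>" and "w \<noteq> 0"
  shows "adjoint_op C *v \<phi> = inverse w *s \<psi>"
proof -
  have "\<psi> = adjoint_op C *v (C *v \<psi>)"
    using assms(1) by (simp add: matrix_vector_mul_assoc unitary_op_def)
  then show ?thesis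
    using assms(2,3) by (simp add: vec.scale vector_smult_assoc)
qed

lemma Weyl_set_conj:
  assumes "unitary_op C" and "weyl_conj C x y" and C\<psi>: "C *v \<psi> = w *s \<phi>" and "w \<noteq> 0"
    and "x \<in> Weyl_set \<psi>"
  shows "y \<in> Weyl_set \<phi>"
proof -
  obtain e where e: "e = 1 \<or> e = -1" "C ** weyl x ** adjoint_op C = scale_op e (weyl y)"
    using assms(2) unfolding weyl_conj_iff_scale by blast
  obtain d where d: "d = 1 \<or> d = -1" "weyl x *v \<psi> = d *s \<psi>"
    using assms(5) unfolding Weyl_set_iff by blast
  have C\<phi>: "adjoint_op C *v \<phi> = inverse w *s \<psi>"
    by (rule adjoint_mult_vec_eq[OF assms(1) C\<psi> \<open>w \<noteq> 0\<close>])
  have "weyl y = scale_op e (C ** weyl x ** adjoint_op C)"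
    using e by (auto simp: scale_op_scale_op)
  then have "weyl y *v \<phi> = e *s (C *v (weyl x *v (adjoint_op C *v \<phi>)))"
    by (simp add: scale_op_mult_vec flip: matrix_vector_mul_assoc)
  also have "\<dots> = (e * d) *s \<phi>"
    using \<open>w \<noteq> 0\<close> by (simp add: C\<phi> vec.scale d(2) C\<psi> vector_smult_assoc mult_ac)
  finally show ?thesis
    unfolding Weyl_set_iff using d(1) e(1) by (intro exI[of _ "e * d"]) auto
qed

lemma clifford_act_Weyl_set:
  assumes C: "C \<in> clifford_circuits" and C\<psi>: "C *v \<psi> = w *s \<phi>" and "w \<noteq> 0"
  shows "clifford_act C ` Weyl_set \<psi> = Weyl_set \<phi>"
proof
  have U: "unitary_op C" and U': "unitary_op (adjoint_op C)"
    using unitary_op_clifford_circuit[OF C] by (auto intro: unitary_op_adjoint_op)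
  show "clifford_act C ` Weyl_set \<psi> \<subseteq> Weyl_set \<phi>"
    using Weyl_set_conj[OF U weyl_conj_clifford_act[OF C] C\<psi> \<open>w \<noteq> 0\<close>] by blast
  have C'\<phi>: "adjoint_op C *v \<phi> = inverse w *s \<psi>"
    by (rule adjoint_mult_vec_eq[OF U C\<psi> \<open>w \<noteq> 0\<close>])
  show "Weyl_set \<phi> \<subseteq> clifford_act C ` Weyl_set \<psi>"
  proof
    fix y assume y: "y \<in> Weyl_set \<phi>"
    define x where "x = clifford_act (adjoint_op C) y"
    have conj': "weyl_conj (adjoint_op C) y x"
      unfolding x_def by (rule weyl_conj_clifford_act[OF adjoint_in_clifford_circuits[OF C]])
    then have "clifford_act C x = y"
      using weyl_conj_adjoint[OF U' conj'] by (simp add: clifford_act_eqI)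
    moreover have "x \<in> Weyl_set \<psi>"
      using Weyl_set_conj[OF U' conj' C'\<phi> _ y] \<open>w \<noteq> 0\<close> by simp
    ultimately show "y \<in> clifford_act C ` Weyl_set \<psi>" by blast
  qed
qed

lemma Weyl_set_ket0: "Weyl_set (ket0 :: 'n::finite qstate) = {x. \<forall>j. x $ Inl j = 0}"
proof -
  have "x \<in> Weyl_set ket0 \<longleftrightarrow> xpart x = (\<lambda>_. False)" for x :: "bit ^ ('n + 'n)"
  proof
    assume "x \<in> Weyl_set ket0"
    then obtain d where "weyl x *v ket0 = d *s ket0"
      unfolding Weyl_set_iff by blast
    then have "(weyl x *v ket0) $ xpart x = d * ket0 $ xpart x"
      by simp
    moreover have "(weyl x *v ket0) $ xpart x \<noteq> 0"
      by (simp add: weyl_mult_ket0)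
    ultimately show "xpart x = (\<lambda>_. False)"
      by (auto simp: ket0_def split: if_splits)
  next
    assume x0: "xpart x = (\<lambda>_. False)"
    have "weyl x *v ket0 = ket0"
      unfolding weyl_mult_ket0 x0 by (simp add: ket0_def vec_eq_iff)
    then show "x \<in> Weyl_set ket0"
      by (simp add: Weyl_set_def)
  qed
  then show ?thesis
    by (auto simp: xpart_def fun_eq_iff)
qed

lemma stabilizer_state_disentangle:
  assumes "stabilizer_state \<psi>"
  obtains C w where "C \<in> clifford_circuits" and "cmod w = 1" and "C *v \<psi> = w *s ket0"
proof -
  obtain C0 w where C0: "C0 \<in> clifford_circuits" and "cmod w = 1" and \<psi>: "\<psi> = w *s (C0 *v ket0)"
    using assms unfolding stabilizer_state_def eq_up_to_phase_def by blast
  have "adjoint_op C0 *v \<psi> = w *s ket0"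
    using unitary_op_clifford_circuit[OF C0]
    by (simp add: \<psi> vec.scale matrix_vector_mul_assoc unitary_op_def)
  with adjoint_in_clifford_circuits[OF C0] \<open>cmod w = 1\<close> show ?thesis
    using that by blast
qed

section \<open>Gaussian elimination by CNOT circuits\<close>

definition z_space :: "(bit ^ ('n::finite + 'n)) set" where
  "z_space = {x. \<forall>j. x $ Inl j = 0}"

definition z_unit :: "'n \<Rightarrow> bit ^ ('n::finite + 'n)" where
  "z_unit k = (\<chi> i. if i = Inr k then 1 else 0)"

definition z_indicator :: "'n set \<Rightarrow> bit ^ ('n::finite + 'n)" where
  "z_indicator S = (\<chi> i. if \<exists>j\<in>S. i = Inr j then 1 else 0)"

inductive_set cnot_circuits :: "'n::finite qop set" where
  cnot_id: "mat 1 \<in> cnot_circuits"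
| cnot_step: "D \<in> cnot_circuits \<Longrightarrow> j \<noteq> k \<Longrightarrow> cnot j k ** D \<in> cnot_circuits"

lemma cnot_circuit_in_clifford_circuits: "D \<in> cnot_circuits \<Longrightarrow> D \<in> clifford_circuits"
  by (induction rule: cnot_circuits.induct) (auto intro: clifford_circuits.intros)

lemma cnot_circuits_mult: "A \<in> cnot_circuits \<Longrightarrow> B \<in> cnot_circuits \<Longrightarrow> A ** B \<in> cnot_circuits"
  by (induction rule: cnot_circuits.induct) (auto simp flip: matrix_mul_assoc intro: cnot_circuits.intros)

lemma cnot_in_cnot_circuits: "j \<noteq> k \<Longrightarrow> cnot j k \<in> cnot_circuits"
  using cnot_circuits.cnot_step[OF cnot_circuits.cnot_id] by simp

lemma cnot_mult_ket0:
  assumes "j \<noteq> k"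
  shows "cnot j k *v ket0 = ket0"
proof -
  have "cnot_flip j k (\<lambda>_. False) = (\<lambda>_. False)"
    by (simp add: cnot_flip_def fun_eq_iff)
  then have "cnot_flip j k r = (\<lambda>_. False) \<longleftrightarrow> r = (\<lambda>_. False)" for r
    using cnot_flip_eq_iff[OF assms, of "\<lambda>_. False" r] by metis
  then show ?thesis
    by (simp add: vec_eq_iff cnot_mult_vec[OF assms] ket0_def)
qed

lemma cnot_circuit_ket0: "D \<in> cnot_circuits \<Longrightarrow> D *v ket0 = ket0"
  by (induction rule: cnot_circuits.induct)
     (auto simp flip: matrix_vector_mul_assoc simp: cnot_mult_ket0)

lemma clifford_act_cnot_circuit_step:
  "D \<in> cnot_circuits \<Longrightarrow> j \<noteq> k \<Longrightarrow> clifford_act (cnot j k ** D) = cnot_act j k \<circ> clifford_act D"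
  by (simp add: clifford_act_gate_mult(3) cnot_circuit_in_clifford_circuits)

lemma cnot_act_z_space: "w \<in> z_space \<Longrightarrow> cnot_act j k w = w + (w $ Inr k) *s z_unit j"
  by (auto simp: vec_eq_iff cnot_act_def z_space_def z_unit_def split: sum.splits)

lemma cnot_circuit_z_space: "D \<in> cnot_circuits \<Longrightarrow> x \<in> z_space \<Longrightarrow> clifford_act D x \<in> z_space"
  by (induction arbitrary: x rule: cnot_circuits.induct)
     (auto simp: clifford_act_mat_one clifford_act_cnot_circuit_step cnot_act_def z_space_def)

lemma span_z_unit:
  "vec.span (z_unit ` K) = {x. (\<forall>j. x $ Inl j = 0) \<and> (\<forall>j. j \<notin> K \<longrightarrow> x $ Inr j = 0)}"
  (is "_ = ?S")
proof
  have "vec.subspace ?S"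
    unfolding vec.subspace_def by auto
  moreover have "z_unit ` K \<subseteq> ?S"
    by (auto simp: z_unit_def)
  ultimately show "vec.span (z_unit ` K) \<subseteq> ?S"
    by (rule vec.span_minimal[rotated])
  show "?S \<subseteq> vec.span (z_unit ` K)"
  proof
    fix x assume x: "x \<in> ?S"
    have "x $ i = (\<Sum>k\<in>K. (x $ Inr k) *s z_unit k) $ i" for i
    proof (cases i)
      case (Inl j)
      then show ?thesis using x by (simp add: z_unit_def)
    next
      case (Inr l)
      then have "(\<Sum>k\<in>K. (x $ Inr k) *s z_unit k) $ i = (\<Sum>k\<in>K. if l = k then x $ Inr k else 0)"
        by (simp add: z_unit_def if_distrib cong: if_cong)
      also have "\<dots> = x $ i"
        using Inr x by (simp add: sum.delta)
      finally show ?thesis by simp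
    qed
    then have "x = (\<Sum>k\<in>K. (x $ Inr k) *s z_unit k)"
      unfolding vec_eq_iff by blast
    also have "\<dots> \<in> vec.span (z_unit ` K)"
      by (intro vec.span_sum vec.span_scale vec.span_base) auto
    finally show "x \<in> vec.span (z_unit ` K)" .
  qed
qed

lemma dim_span_z_unit: "vec.dim (vec.span (z_unit ` J)) = card J"
proof -
  have "inj (z_unit :: 'a \<Rightarrow> bit ^ ('a + 'a))"
    by (rule injI) (auto simp: z_unit_def vec_eq_iff split: if_splits)
  moreover have "vec.independent (z_unit ` J)"
    by (rule vec.independent_mono[OF independent_cart_basis])
       (auto simp: cart_basis_def z_unit_def axis_def)
  ultimately show ?thesis
    by (simp add: vec.dim_eq_card_independent card_image inj_on_subset)
qed

lemma cnot_circuit_add_indicator: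
  assumes "m \<notin> S"
  shows "\<exists>D\<in>cnot_circuits. \<forall>w\<in>z_space. clifford_act D w = w + (w $ Inr m) *s z_indicator S"
  using finite[of S] assms
proof (induction rule: finite_induct)
  case empty
  have "z_indicator {} = (0 :: bit ^ ('a + 'a))"
    by (simp add: z_indicator_def vec_eq_iff)
  then show ?case
    by (intro bexI[OF _ cnot_circuits.cnot_id]) (simp add: clifford_act_mat_one)
next
  case (insert j S)
  then obtain D where D: "D \<in> cnot_circuits"
    and act_D: "\<forall>w\<in>z_space. clifford_act D w = w + (w $ Inr m) *s z_indicator S"
    by auto
  have "j \<noteq> m"
    using insert by auto
  have "clifford_act (cnot j m ** D) w = w + (w $ Inr m) *s z_indicator (insert j S)"
    if w: "w \<in> z_space" for w
  proof -
    let ?u = "w + (w $ Inr m) *s z_indicator S"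
    have "?u \<in> z_space" and "?u $ Inr m = w $ Inr m"
      using w insert.prems by (auto simp: z_space_def z_indicator_def)
    then have "cnot_act j m ?u = ?u + (w $ Inr m) *s z_unit j"
      by (simp add: cnot_act_z_space)
    also have "\<dots> = w + (w $ Inr m) *s z_indicator (insert j S)"
      using insert.hyps by (auto simp: vec_eq_iff z_indicator_def z_unit_def algebra_simps)
    finally show ?thesis
      using D act_D w \<open>j \<noteq> m\<close> by (simp add: clifford_act_cnot_circuit_step)
  qed
  then show ?case
    using cnot_circuits.cnot_step[OF D \<open>j \<noteq> m\<close>] by blast
qed

lemma cnot_circuit_to_unit:
  assumes "v \<in> z_space" and "v $ Inr m = 1"
  shows "\<exists>D\<in>cnot_circuits. clifford_act D v = z_unit m \<and>
           (\<forall>w\<in>z_space. w $ Inr m = 0 \<longrightarrow> clifford_act D w = w)"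
proof -
  let ?S = "{j. j \<noteq> m \<and> v $ Inr j = 1}"
  obtain D where D: "D \<in> cnot_circuits"
    and act_D: "\<forall>w\<in>z_space. clifford_act D w = w + (w $ Inr m) *s z_indicator ?S"
    using cnot_circuit_add_indicator[of m ?S] by auto
  have "v + z_indicator ?S = z_unit m"
  proof -
    have "(v + z_indicator ?S) $ i = z_unit m $ i" for i
      using assms by (cases i) (auto simp: z_space_def z_indicator_def z_unit_def)
    then show ?thesis by (simp add: vec_eq_iff)
  qed
  then have "clifford_act D v = z_unit m"
    using act_D assms by simp
  moreover have "\<forall>w\<in>z_space. w $ Inr m = 0 \<longrightarrow> clifford_act D w = w"
    using act_D by simp
  ultimately show ?thesis
    using D by blast
qed

lemma cnot_circuit_to_unit_fixing:
  assumes "v \<in> z_space" and "v $ Inr l = 1" and "l \<notin> K" and "m \<notin> K"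
  shows "\<exists>D\<in>cnot_circuits. clifford_act D v = z_unit m \<and> (\<forall>k\<in>K. clifford_act D (z_unit k) = z_unit k)"
proof -
  have unit_K: "z_unit k \<in> z_space" "z_unit k $ Inr m = 0" if "k \<in> K" for k
    using that assms(4) by (auto simp: z_space_def z_unit_def)
  show ?thesis
  proof (cases "v $ Inr m = 1")
    case True
    then show ?thesis
      using cnot_circuit_to_unit[OF assms(1)] unit_K by blast
  next
    case False
    (* First add coordinate l to coordinate m; this fixes every z_unit k with k \<noteq> l. *)
    then have "l \<noteq> m"
      using assms(2) by auto
    let ?v = "cnot_act m l v"
    have "?v \<in> z_space" and "?v $ Inr m = 1"
      using assms(1,2) False by (auto simp: cnot_act_def z_space_def)
    then obtain D where D: "D \<in> cnot_circuits" "clifford_act D ?v = z_unit m"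
      and fix_D: "\<forall>w\<in>z_space. w $ Inr m = 0 \<longrightarrow> clifford_act D w = w"
      using cnot_circuit_to_unit by blast
    have act: "clifford_act (D ** cnot m l) = clifford_act D \<circ> cnot_act m l"
      using clifford_act_mult[OF cnot_circuit_in_clifford_circuits[OF D(1)]
          cnot_in_clifford_circuits[OF \<open>l \<noteq> m\<close>[symmetric]]]
      by (simp add: clifford_act_cnot \<open>l \<noteq> m\<close>[symmetric])
    have "cnot_act m l (z_unit k) = z_unit k" if "k \<in> K" for k
      using unit_K[OF that] that assms(3) by (auto simp: cnot_act_z_space z_unit_def)
    then have "\<forall>k\<in>K. clifford_act (D ** cnot m l) (z_unit k) = z_unit k"
      using act fix_D unit_K by simp
    moreover have "clifford_act (D ** cnot m l) v = z_unit m"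
      using act D(2) by simp
    ultimately show ?thesis
      using cnot_circuits_mult[OF D(1) cnot_in_cnot_circuits[OF \<open>l \<noteq> m\<close>[symmetric]]] by blast
  qed
qed

lemma z_unit_image_notin_span:
  assumes "linear_F2 g" and "inj_on g (vec.span (z_unit ` J))" and "K \<subseteq> J" and "m \<in> J" and "m \<notin> K"
    and "\<forall>k\<in>K. g (z_unit k) = z_unit k"
  shows "g (z_unit m) \<notin> vec.span (z_unit ` K)"
proof
  assume in_K: "g (z_unit m) \<in> vec.span (z_unit ` K)"
  then have "g (g (z_unit m)) = id (g (z_unit m))"
    by (rule vec.linear_eq_on[OF assms(1) vec.linear_id]) (use assms(6) in auto)
  moreover have "g (z_unit m) \<in> vec.span (z_unit ` J)"
    using in_K vec.span_mono[of "z_unit ` K" "z_unit ` J"] assms(3) by blast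
  moreover have "z_unit m \<in> vec.span (z_unit ` J)"
    using assms(4) by (intro vec.span_base) auto
  ultimately have "g (z_unit m) = z_unit m"
    using assms(2) by (simp add: inj_on_eq_iff)
  with in_K have "z_unit m \<in> vec.span (z_unit ` K)"
    by simp
  with assms(5) show False
    unfolding span_z_unit by (auto simp: z_unit_def)
qed

(* Place the basis vectors one at a time; by injectivity the next image still has a 1 outside
   the coordinates already placed. *)
lemma cnot_circuit_maps_basis:
  assumes f: "linear_F2 f" "inj_on f (vec.span (z_unit ` J))" "f ` vec.span (z_unit ` J) \<subseteq> z_space"
  shows "\<exists>D\<in>cnot_circuits. \<forall>k\<in>J. clifford_act D (f (z_unit k)) = z_unit k"
proof -
  have "\<exists>D\<in>cnot_circuits. \<forall>k\<in>K. clifford_act D (f (z_unit k)) = z_unit k" if "K \<subseteq> J" for K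
    using finite[of K] that
  proof (induction rule: finite_subset_induct')
    case empty
    show ?case using cnot_circuits.cnot_id by blast
  next
    case (insert m K)
    then obtain D where D: "D \<in> cnot_circuits" "\<forall>k\<in>K. clifford_act D (f (z_unit k)) = z_unit k"
      by blast
    let ?v = "clifford_act D (f (z_unit m))"
    have "z_unit m \<in> vec.span (z_unit ` J)"
      using insert by (intro vec.span_base) auto
    then have "?v \<in> z_space"
      using f(3) cnot_circuit_z_space[OF D(1)] by blast
    moreover have "?v \<notin> vec.span (z_unit ` K)"
    proof (rule z_unit_image_notin_span[where g="clifford_act D \<circ> f", simplified])
      show "linear_F2 (clifford_act D \<circ> f)"
        using f(1) linear_clifford_act[OF cnot_circuit_in_clifford_circuits[OF D(1)]]
        by (rule Vector_Spaces.linear_compose)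
      show "inj_on (clifford_act D \<circ> f) (vec.span (z_unit ` J))"
        using f(2) inj_clifford_act[OF cnot_circuit_in_clifford_circuits[OF D(1)]]
        by (simp add: comp_inj_on inj_on_subset)
    qed (use insert D(2) in auto)
    ultimately obtain l where "l \<notin> K" "?v $ Inr l = 1"
      by (auto simp: span_z_unit z_space_def)
    then obtain D' where D': "D' \<in> cnot_circuits" "clifford_act D' ?v = z_unit m"
        "\<forall>k\<in>K. clifford_act D' (z_unit k) = z_unit k"
      using cnot_circuit_to_unit_fixing[OF \<open>?v \<in> z_space\<close>] insert.hyps by blast
    have "clifford_act (D' ** D) = clifford_act D' \<circ> clifford_act D"
      using D(1) D'(1) by (simp add: clifford_act_mult cnot_circuit_in_clifford_circuits)
    then have "\<forall>k\<in>insert m K. clifford_act (D' ** D) (f (z_unit k)) = z_unit k"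
      using D(2) D'(2,3) by simp
    then show ?case
      using cnot_circuits_mult[OF D'(1) D(1)] by blast
  qed
  then show ?thesis by blast
qed

lemma cnot_circuit_onto_span:
  assumes "vec.subspace U" and "U \<subseteq> z_space" and "vec.dim U = card J"
  shows "\<exists>D\<in>cnot_circuits. clifford_act D ` U = vec.span (z_unit ` J)"
proof -
  obtain f where f: "linear_F2 f" "f ` vec.span (z_unit ` J) = U" "inj_on f (vec.span (z_unit ` J))"
    using vec.subspace_isomorphism[OF vec.subspace_span assms(1)] assms(3) dim_span_z_unit by metis
  obtain D where D: "D \<in> cnot_circuits" "\<forall>k\<in>J. clifford_act D (f (z_unit k)) = z_unit k"
    using cnot_circuit_maps_basis[OF f(1,3)] f(2) assms(2) by blast
  have lin: "linear_F2 (clifford_act D \<circ> f)"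
    using f(1) linear_clifford_act[OF cnot_circuit_in_clifford_circuits[OF D(1)]]
    by (rule Vector_Spaces.linear_compose)
  have "(clifford_act D \<circ> f) x = id x" if "x \<in> vec.span (z_unit ` J)" for x
    by (rule vec.linear_eq_on[OF lin vec.linear_id that]) (use D(2) in auto)
  then have "clifford_act D ` U = vec.span (z_unit ` J)"
    unfolding f(2)[symmetric] by (force simp: image_image)
  with D(1) show ?thesis by blast
qed

lemma qpos_strict_mono: "j < j' \<Longrightarrow> qpos j < qpos (j' :: 'n::{finite,linorder})"
  unfolding qpos_def by (rule psubset_card_mono) auto

lemma qpos_less_card: "qpos (j :: 'n::{finite,linorder}) < CARD('n)"
  unfolding qpos_def by (rule psubset_card_mono) auto

lemma bij_betw_qpos: "bij_betw (qpos :: 'n::{finite,linorder} \<Rightarrow> nat) UNIV {..<CARD('n)}"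
proof -
  have inj: "inj (qpos :: 'n \<Rightarrow> nat)"
    by (metis injI linorder_neqE qpos_strict_mono less_irrefl)
  moreover have "range (qpos :: 'n \<Rightarrow> nat) = {..<CARD('n)}"
    using qpos_less_card card_image[OF inj]
    by (intro card_subset_eq) auto
  ultimately show ?thesis
    by (simp add: bij_betw_def)
qed

lemma card_qpos_ge: "card {j :: 'n::{finite,linorder}. \<not> qpos j < t} = CARD('n) - t"
proof -
  have "qpos ` {j :: 'n. \<not> qpos j < t} = {t..<CARD('n)}"
  proof
    show "qpos ` {j :: 'n. \<not> qpos j < t} \<subseteq> {t..<CARD('n)}"
      using qpos_less_card by auto
    show "{t..<CARD('n)} \<subseteq> qpos ` {j :: 'n. \<not> qpos j < t}"
    proof
      fix i assume i: "i \<in> {t..<CARD('n)}"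
      then have "i \<in> range (qpos :: 'n \<Rightarrow> nat)"
        using bij_betw_qpos by (auto simp: bij_betw_def)
      then obtain j :: 'n where "i = qpos j"
        by auto
      with i show "i \<in> qpos ` {j :: 'n. \<not> qpos j < t}"
        by auto
    qed
  qed
  moreover have "inj_on qpos {j :: 'n. \<not> qpos j < t}"
    using bij_betw_imp_inj_on[OF bij_betw_qpos[where 'n='n]] by (rule inj_on_subset) simp
  ultimately show ?thesis
    by (metis card_atLeastLessThan card_image)
qed

theorem lemma5p1:
  fixes \<psi> :: "'n::{finite,linorder} qstate"
    and T :: "(bit ^ ('n + 'n)) set"
    and t :: nat
  assumes "stabilizer_state \<psi>"
    and "t \<le> CARD('n)"
    and "vec.subspace T"
    and "T \<subseteq> Weyl_set \<psi>"
    and "vec.dim T = CARD('n) - t"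
  shows "\<exists>C\<in>clifford_circuits.
           eq_up_to_phase (C *v \<psi>) ket0 \<and>
           clifford_act C ` Weyl_set \<psi> = {x. \<forall>j. x $ Inl j = 0} \<and>
           clifford_act C ` T = {x. (\<forall>j. x $ Inl j = 0) \<and> (\<forall>j. qpos j < t \<longrightarrow> x $ Inr j = 0)}"
proof -
  obtain C1 w where C1: "C1 \<in> clifford_circuits" and "cmod w = 1" and C1\<psi>: "C1 *v \<psi> = w *s ket0"
    using stabilizer_state_disentangle[OF assms(1)] .
  then have "w \<noteq> 0" by auto
  have "clifford_act C1 ` T \<subseteq> z_space"
    using clifford_act_Weyl_set[OF C1 C1\<psi> \<open>w \<noteq> 0\<close>] assms(4)
    by (auto simp: Weyl_set_ket0 z_space_def)
  then obtain D where D: "D \<in> cnot_circuits"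
    and DT: "clifford_act D ` clifford_act C1 ` T = vec.span (z_unit ` {j. \<not> qpos j < t})"
    using cnot_circuit_onto_span clifford_act_subspace[OF C1 assms(3)] assms(5) card_qpos_ge
    by metis
  have C: "D ** C1 \<in> clifford_circuits"
    by (rule clifford_circuits_mult[OF cnot_circuit_in_clifford_circuits[OF D] C1])
  have C\<psi>: "(D ** C1) *v \<psi> = w *s ket0"
    by (simp add: C1\<psi> vec.scale cnot_circuit_ket0[OF D] flip: matrix_vector_mul_assoc)
  show ?thesis
  proof (intro bexI[OF _ C] conjI)
    show "eq_up_to_phase ((D ** C1) *v \<psi>) ket0"
      using C\<psi> \<open>cmod w = 1\<close> by (auto simp: eq_up_to_phase_def)
    show "clifford_act (D ** C1) ` Weyl_set \<psi> = {x. \<forall>j. x $ Inl j = 0}"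
      using clifford_act_Weyl_set[OF C C\<psi> \<open>w \<noteq> 0\<close>] by (simp add: Weyl_set_ket0)
    show "clifford_act (D ** C1) ` T = {x. (\<forall>j. x $ Inl j = 0) \<and> (\<forall>j. qpos j < t \<longrightarrow> x $ Inr j = 0)}"
      using DT by (simp add: clifford_act_mult[OF cnot_circuit_in_clifford_circuits[OF D] C1]
          image_comp span_z_unit)
  qed
qed

end
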